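(* Let $N$ and $r$ be relatively prime positive integers greater than $1$, and let $\bar{r}$ be an integer such that $r\bar{r}\equiv 1 \pmod N$. Let $\Gamma$ be the $4$-valent graph on $\mathbb{Z}/N\mathbb{Z}$ in which each vertex $x$ is connected to the vertices $r(x+1)$, $r(x-1)$, $\bar{r}x+1$ and $\bar{r}x-1$. Then there exists a constant $c>0$, depending only on $r$, such that every nontrivial eigenvalue $\lambda$ of the adjacency matrix of $\Gamma$ either satisfies $$|\lambda| \le 4 - \frac{c}{(\log N)^2},$$ or is of the form $\lambda = 4\cos(2\pi k/N)$ for some $k$ satisfying $rk\equiv k \pmod N$. In particular, if $N$ is a power of $2$ and $\gcd(r-1,N)=2$, then $\Gamma$ is a bipartite graph for which all eigenvalues not equal to $\pm 4$ satisfy $|\lambda| \le 4 - \frac{c}{(\log N)^2}$.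
   Context: The edge relation is symmetric (if $y=r(x\pm1)$ then $x=\bar{r}y\mp 1$), so $\Gamma$ is an undirected $4$-regular graph (edges counted with multiplicity). Its adjacency operator acts on functions $f:\mathbb{Z}/N\mathbb{Z}\to\mathbb{C}$ by $(Af)(x)=\sum_{y\sim x} f(y)$, the sum running over the four neighbors of $x$ listed above, with multiplicity. The trivial eigenvalue is $4$, attained by the constant function; "nontrivial eigenvalues" are the eigenvalues of $A$ restricted to the orthogonal complement of the constant functions. *)

theory Defs
  imports "HOL-Analysis.Analysis" "HOL-Number_Theory.Number_Theory"
begin

text \<open>Vertices of the graph are the residues 0,...,N-1 (representing Z/NZ).
  The four neighbours of x, listed with multiplicity.\<close>
definition nbrs :: "int \<Rightarrow> int \<Rightarrow> int \<Rightarrow> int \<Rightarrow> int list" where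
  "nbrs N r rb x = [(r * (x + 1)) mod N, (r * (x - 1)) mod N, (rb * x + 1) mod N, (rb * x - 1) mod N]"

definition adj_op :: "int \<Rightarrow> int \<Rightarrow> int \<Rightarrow> (int \<Rightarrow> complex) \<Rightarrow> int \<Rightarrow> complex" where
  "adj_op N r rb f x = (\<Sum>y\<leftarrow>nbrs N r rb x. f y)"

definition is_eigenvalue :: "int \<Rightarrow> int \<Rightarrow> int \<Rightarrow> complex \<Rightarrow> bool" where
  "is_eigenvalue N r rb lam \<longleftrightarrow>
     (\<exists>f. (\<exists>x\<in>{0..<N}. f x \<noteq> 0) \<and> (\<forall>x\<in>{0..<N}. adj_op N r rb f x = lam * f x))"

text \<open>lam is a nontrivial eigenvalue: an eigenvalue of the operator restricted to the
  orthogonal complement of the constant functions.\<close>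
definition is_nontrivial_eigenvalue :: "int \<Rightarrow> int \<Rightarrow> int \<Rightarrow> complex \<Rightarrow> bool" where
  "is_nontrivial_eigenvalue N r rb lam \<longleftrightarrow>
     (\<exists>f. (\<exists>x\<in>{0..<N}. f x \<noteq> 0) \<and> (\<Sum>x\<in>{0..<N}. f x) = 0 \<and>
          (\<forall>x\<in>{0..<N}. adj_op N r rb f x = lam * f x))"

definition is_bipartite :: "int \<Rightarrow> int \<Rightarrow> int \<Rightarrow> bool" where
  "is_bipartite N r rb \<longleftrightarrow>
     (\<exists>S. S \<subseteq> {0..<N} \<and> (\<forall>x\<in>{0..<N}. \<forall>y\<in>set (nbrs N r rb x). (x \<in> S \<longleftrightarrow> y \<notin> S)))"

end

theory Submission
  imports Defs "HOL-Library.Real_Mod"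
begin

text \<open>The discrete Fourier transform F of an eigenfunction with eigenvalue \<lambda>
  satisfies \<lambda> F(k) = \<beta>(k) F(r' k) + \<beta>(r k) F(r k), where r r' = 1 mod N and
  \<beta>(k) = 2 cos (2 \<pi> k / N), so the operator becomes a weighted walk along the orbits of
  multiplication by r on frequencies. If F is nonzero at a frequency k fixed by r, this forces
  \<lambda> = 2 \<beta>(k). Otherwise every orbit through the support of F reaches, within
  L = floor (log2 N) steps, a frequency with |\<beta>| \<le> 2 cos (\<pi> / (2 r)); a Poincare-type
  inequality along the orbits then gives 4 - |\<lambda>| \<ge> g^2 / (16 L^2) with
  g = 2 - 2 cos (\<pi> / (2 r)). For N a power of two with gcd (r - 1) N = 2 the only fixed
  frequencies are 0 and N/2, which give \<plusminus>4, and parity makes the graph bipartite.\<close>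

section \<open>Energy inequalities along the orbits of a permutation\<close>

lemma sq_le_weighted_sum_add_variation:
  fixes u c :: "nat \<Rightarrow> real"
  assumes c: "\<And>i. i < L \<Longrightarrow> 0 \<le> c i" and g: "0 < g"
    and large: "u 0 \<noteq> 0 \<Longrightarrow> \<exists>j<L. g \<le> c j"
  shows "(u 0)^2 \<le> 2/g * (\<Sum>i<L. c i * (u i)^2) + 2 * real L * (\<Sum>i<L. (u i - u (Suc i))^2)"
proof -
  define G where "G = (\<Sum>i<L. c i * (u i)^2)"
  define T where "T = (\<Sum>i<L. (u i - u (Suc i))^2)"
  have G: "0 \<le> G" and T: "0 \<le> T"
    unfolding G_def T_def using c by (auto intro!: sum_nonneg)
  show ?thesis
  proof (cases "u 0 = 0")
    case True
    then show ?thesis using G T g unfolding G_def T_def by simp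
  next
    case False
    then obtain j where j: "j < L" "g \<le> c j" using large by blast
    have "g * (u j)^2 \<le> c j * (u j)^2"
      using j by (simp add: mult_right_mono)
    also have "\<dots> \<le> G"
      unfolding G_def using j c by (intro member_le_sum) auto
    finally have uj: "(u j)^2 \<le> G/g"
      using g by (simp add: field_simps)
    have "(u 0 - u j)^2 = (\<Sum>i<j. u i - u (Suc i))^2"
      by (simp add: sum_lessThan_telescope')
    also have "\<dots> \<le> (\<Sum>i<j. (u i - u (Suc i))^2) * j"
      using sum_squared_le_sum_of_squares[of _ "{..<j}"] by simp
    also have "\<dots> \<le> T * L"
      unfolding T_def using j by (intro mult_mono sum_mono2 sum_nonneg) auto
    finally have u0j: "(u 0 - u j)^2 \<le> T * L" .
    have "(u 0)^2 \<le> 2*(u j)^2 + 2*(u 0 - u j)^2"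
      using zero_le_power2[of "u 0 - 2 * u j"] by (simp add: power2_diff power_mult_distrib algebra_simps)
    also have "\<dots> \<le> 2*(G/g) + 2*(T*L)"
      using uj u0j by linarith
    also have "\<dots> = 2/g * G + 2 * real L * T"
      by simp
    finally show ?thesis unfolding G_def T_def .
  qed
qed

lemma sum_sq_le_orbit_bound:
  fixes a \<gamma> :: "'a \<Rightarrow> real" and L :: nat
  assumes \<sigma>: "bij_betw \<sigma> A A" and \<gamma>: "\<And>k. k \<in> A \<Longrightarrow> 0 \<le> \<gamma> k" and g: "0 < g"
    and orbit: "\<And>k. k \<in> A \<Longrightarrow> a k \<noteq> 0 \<Longrightarrow> \<exists>j<L. g \<le> \<gamma> ((\<sigma>^^j) k)"
  shows "(\<Sum>k\<in>A. (a k)^2)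
    \<le> 2*L/g * (\<Sum>k\<in>A. \<gamma> k * (a k)^2) + 2*L^2 * (\<Sum>k\<in>A. (a k - a (\<sigma> k))^2)"
proof -
  have orbit_in: "(\<sigma>^^i) k \<in> A" if "k \<in> A" for i k
    using bij_betwE[OF bij_betw_funpow[OF \<sigma>]] that by blast
  have orbit_sum: "(\<Sum>k\<in>A. h ((\<sigma>^^i) k)) = sum h A" for h :: "'a \<Rightarrow> real" and i
    using sum.reindex_bij_betw[OF bij_betw_funpow[OF \<sigma>]] .
  have "(\<Sum>k\<in>A. (a k)^2) \<le> (\<Sum>k\<in>A. 2/g * (\<Sum>i<L. \<gamma> ((\<sigma>^^i) k) * (a ((\<sigma>^^i) k))^2)
      + 2 * real L * (\<Sum>i<L. (a ((\<sigma>^^i) k) - a (\<sigma> ((\<sigma>^^i) k)))^2))"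
  proof (rule sum_mono)
    fix k assume k: "k \<in> A"
    show "(a k)^2 \<le> 2/g * (\<Sum>i<L. \<gamma> ((\<sigma>^^i) k) * (a ((\<sigma>^^i) k))^2)
      + 2 * real L * (\<Sum>i<L. (a ((\<sigma>^^i) k) - a (\<sigma> ((\<sigma>^^i) k)))^2)"
      using sq_le_weighted_sum_add_variation[of L "\<lambda>i. \<gamma> ((\<sigma>^^i) k)" g "\<lambda>i. a ((\<sigma>^^i) k)"]
        \<gamma> orbit_in g orbit k by simp
  qed
  also have "\<dots> = 2/g * (\<Sum>i<L. \<Sum>k\<in>A. \<gamma> ((\<sigma>^^i) k) * (a ((\<sigma>^^i) k))^2)
      + 2 * real L * (\<Sum>i<L. \<Sum>k\<in>A. (a ((\<sigma>^^i) k) - a (\<sigma> ((\<sigma>^^i) k)))^2)"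
    by (simp add: sum.distrib sum_distrib_left sum.swap[of _ "{..<L}"])
  also have "\<dots> = 2*L/g * (\<Sum>k\<in>A. \<gamma> k * (a k)^2) + 2*L^2 * (\<Sum>k\<in>A. (a k - a (\<sigma> k))^2)"
    by (simp only: orbit_sum[of "\<lambda>k. \<gamma> k * (a k)^2"] orbit_sum[of "\<lambda>k. (a k - a (\<sigma> k))^2"])
      (simp add: power2_eq_square)
  finally show ?thesis .
qed

text \<open>After reindexing by \<sigma>, the \<tau>-terms coincide with the \<sigma>-terms; hence the factor 2.\<close>

lemma norm_eigenvalue_le_orbit_sum:
  fixes F :: "'a \<Rightarrow> complex" and w :: "'a \<Rightarrow> real"
  assumes \<sigma>: "bij_betw \<sigma> A A" and \<tau>: "\<And>k. k \<in> A \<Longrightarrow> \<tau> (\<sigma> k) = k"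
    and eq: "\<And>k. k \<in> A \<Longrightarrow> lam * F k = w k * F (\<tau> k) + w (\<sigma> k) * F (\<sigma> k)"
  shows "cmod lam * (\<Sum>k\<in>A. (cmod (F k))^2)
    \<le> 2 * (\<Sum>k\<in>A. \<bar>w (\<sigma> k)\<bar> * cmod (F k) * cmod (F (\<sigma> k)))"
proof -
  have "(\<Sum>k\<in>A. cnj (F k) * (lam * F k)) = lam * of_real (\<Sum>k\<in>A. (cmod (F k))^2)"
    by (simp add: sum_distrib_left mult_ac flip: complex_norm_square)
  then have "cmod lam * (\<Sum>k\<in>A. (cmod (F k))^2) = cmod (\<Sum>k\<in>A. cnj (F k) * (lam * F k))"
    by (simp add: norm_mult sum_nonneg del: of_real_sum)
  also have "\<dots> \<le> (\<Sum>k\<in>A. cmod (F k) * (\<bar>w k\<bar> * cmod (F (\<tau> k)) + \<bar>w (\<sigma> k)\<bar> * cmod (F (\<sigma> k))))"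
  proof (rule sum_norm_le)
    fix k assume "k \<in> A"
    then have "cmod (cnj (F k) * (lam * F k))
        = cmod (F k) * cmod (w k * F (\<tau> k) + w (\<sigma> k) * F (\<sigma> k))"
      by (simp add: eq norm_mult)
    also have "\<dots> \<le> cmod (F k) * (\<bar>w k\<bar> * cmod (F (\<tau> k)) + \<bar>w (\<sigma> k)\<bar> * cmod (F (\<sigma> k)))"
      by (intro mult_left_mono norm_triangle_le) (auto simp: norm_mult)
    finally show "cmod (cnj (F k) * (lam * F k))
        \<le> cmod (F k) * (\<bar>w k\<bar> * cmod (F (\<tau> k)) + \<bar>w (\<sigma> k)\<bar> * cmod (F (\<sigma> k)))" .
  qed
  also have "\<dots> = (\<Sum>k\<in>A. \<bar>w k\<bar> * cmod (F k) * cmod (F (\<tau> k)))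
      + (\<Sum>k\<in>A. \<bar>w (\<sigma> k)\<bar> * cmod (F k) * cmod (F (\<sigma> k)))"
    by (simp add: sum.distrib algebra_simps)
  also have "(\<Sum>k\<in>A. \<bar>w k\<bar> * cmod (F k) * cmod (F (\<tau> k)))
      = (\<Sum>k\<in>A. \<bar>w (\<sigma> k)\<bar> * cmod (F k) * cmod (F (\<sigma> k)))"
    using sum.reindex_bij_betw[OF \<sigma>, of "\<lambda>k. \<bar>w k\<bar> * cmod (F k) * cmod (F (\<tau> k))"] \<tau>
    by (simp add: mult_ac)
  finally show ?thesis by simp
qed

lemma weighted_sq_le_cross_term:
  fixes c x y t :: real
  assumes "0 \<le> c" "c \<le> 2" "0 \<le> x" "0 \<le> y" "0 < t"
  shows "c * x^2 \<le> c * x * y + t * x^2 + (x - y)^2 / t"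
proof -
  have "c * x * (x - y) \<le> c * x * \<bar>x - y\<bar>"
    using assms by (intro mult_left_mono) auto
  also have "\<dots> \<le> 2 * x * \<bar>x - y\<bar>"
    using assms by (intro mult_right_mono) auto
  also have "\<dots> \<le> t * x^2 + (x - y)^2 / t"
  proof -
    have "2 * t * x * \<bar>x - y\<bar> \<le> (t * x)^2 + (x - y)^2"
      using zero_le_power2[of "t * x - \<bar>x - y\<bar>"] by (simp add: power2_diff algebra_simps)
    then show ?thesis
      using \<open>0 < t\<close> by (simp add: field_simps power2_eq_square)
  qed
  finally show ?thesis
    by (simp add: algebra_simps power2_eq_square)
qed

lemma spectral_gap_arith:
  fixes S E P D \<delta> g L :: real
  assumes S: "0 < S" and L: "1 \<le> L" and g: "0 < g" "g \<le> 2" and D: "0 \<le> D" and P: "0 \<le> P"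
    and B: "2*D + 2*P \<le> \<delta>*S"
    and C: "E \<le> P + g/(8*L)*S + 8*L/g*D"
    and O: "S \<le> 2*L/g*E + 2*L^2*D"
  shows "g^2 \<le> 16 * L^2 * \<delta>"
proof -
  have "2*L/g*E \<le> 2*L/g*(P + g/(8*L)*S + 8*L/g*D)"
    using C g L by (intro mult_left_mono) auto
  then have "S \<le> 2*L/g*(P + g/(8*L)*S + 8*L/g*D) + 2*L^2*D"
    using O by linarith
  then have "g^2*S \<le> g^2*(2*L/g*(P + g/(8*L)*S + 8*L/g*D) + 2*L^2*D)"
    by (simp add: mult_left_mono)
  also have "\<dots> = 2*L*g*P + g^2*S/4 + (16 + 2*g^2)*L^2*D"
    using g L by (simp add: field_simps power2_eq_square)
  also have "2*L*g*P \<le> 4*L^2*P"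
  proof -
    have "2*L*g \<le> 4*L^2"
      using g L by (simp add: power2_eq_square)
    then show ?thesis using P by (rule mult_right_mono)
  qed
  also have "(16 + 2*g^2)*L^2*D \<le> 24*L^2*D"
    using g power_mono[of g 2 2] D by (intro mult_right_mono) auto
  also have "4*L^2*P + g^2*S/4 + 24*L^2*D \<le> g^2*S/4 + 12*L^2*(\<delta>*S)"
    using B P D mult_left_mono[of "4*P + 24*D" "12*(\<delta>*S)" "L^2"] by (simp add: algebra_simps)
  finally have "g^2*S \<le> (16*L^2*\<delta>)*S"
    by (simp add: algebra_simps)
  then show ?thesis
    using S by simp
qed

lemma sum_sq_diff_orbit:
  fixes a :: "'a \<Rightarrow> real"
  assumes \<sigma>: "bij_betw \<sigma> A A"
  shows "(\<Sum>k\<in>A. (a k - a (\<sigma> k))^2) = 2 * (\<Sum>k\<in>A. (a k)^2) - 2 * (\<Sum>k\<in>A. a k * a (\<sigma> k))"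
  using sum.reindex_bij_betw[OF \<sigma>, of "\<lambda>k. (a k)^2"]
  by (simp add: power2_diff sum.distrib sum_subtractf sum_distrib_left mult.assoc)

lemma sum_weighted_sq_le_cross:
  fixes a \<gamma> :: "'a \<Rightarrow> real"
  assumes \<sigma>: "bij_betw \<sigma> A A" and a: "\<And>k. k \<in> A \<Longrightarrow> 0 \<le> a k"
    and \<gamma>: "\<And>k. k \<in> A \<Longrightarrow> 0 \<le> \<gamma> k \<and> \<gamma> k \<le> 2" and t: "0 < t"
  shows "(\<Sum>k\<in>A. \<gamma> k * (a k)^2) \<le> (\<Sum>k\<in>A. \<gamma> (\<sigma> k) * a k * a (\<sigma> k))
    + t * (\<Sum>k\<in>A. (a k)^2) + (\<Sum>k\<in>A. (a k - a (\<sigma> k))^2) / t"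
proof -
  have shift: "(\<Sum>k\<in>A. h (\<sigma> k)) = sum h A" for h :: "'a \<Rightarrow> real"
    using sum.reindex_bij_betw[OF \<sigma>] .
  have "\<sigma> k \<in> A" if "k \<in> A" for k
    using bij_betwE[OF \<sigma>] that by blast
  then have "(\<Sum>k\<in>A. \<gamma> (\<sigma> k) * (a (\<sigma> k))^2)
      \<le> (\<Sum>k\<in>A. \<gamma> (\<sigma> k) * a (\<sigma> k) * a k + t * (a (\<sigma> k))^2 + (a (\<sigma> k) - a k)^2 / t)"
    using \<gamma> a t by (intro sum_mono weighted_sq_le_cross_term) auto
  then show ?thesis
    by (simp add: shift[of "\<lambda>k. \<gamma> k * (a k)^2"] sum.distrib sum_distrib_left sum_divide_distrib
        shift[of "\<lambda>k. t * (a k)^2"] power2_commute mult_ac)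
qed

text \<open>With S = \<Sum> a^2, the variation D = \<Sum> (a k - a (\<sigma> k))^2 and
  P = \<Sum> \<gamma> (\<sigma> k) a k a (\<sigma> k), the hypothesis eig says 2 D + 2 P \<le> (4 - \<mu>) S.
  Mass of a that meets no weight \<gamma> \<ge> g within L steps must vary along its orbit,
  so D and P cannot both be small compared with S.\<close>

lemma orbit_spectral_gap:
  fixes a \<gamma> :: "'a \<Rightarrow> real" and L :: nat
  assumes A: "finite A" and \<sigma>: "bij_betw \<sigma> A A"
    and a: "\<And>k. k \<in> A \<Longrightarrow> 0 \<le> a k" and nz: "\<exists>k\<in>A. a k \<noteq> 0"
    and \<gamma>: "\<And>k. k \<in> A \<Longrightarrow> 0 \<le> \<gamma> k \<and> \<gamma> k \<le> 2"
    and g: "0 < g" "g \<le> 2"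
    and orbit: "\<And>k. k \<in> A \<Longrightarrow> a k \<noteq> 0 \<Longrightarrow> \<exists>j<L. g \<le> \<gamma> ((\<sigma>^^j) k)"
    and eig: "\<mu> * (\<Sum>k\<in>A. (a k)^2) \<le> 2 * (\<Sum>k\<in>A. (2 - \<gamma> (\<sigma> k)) * a k * a (\<sigma> k))"
  shows "g^2 \<le> 16 * (real L)^2 * (4 - \<mu>)"
proof -
  define S where "S = (\<Sum>k\<in>A. (a k)^2)"
  define D where "D = (\<Sum>k\<in>A. (a k - a (\<sigma> k))^2)"
  define P where "P = (\<Sum>k\<in>A. \<gamma> (\<sigma> k) * a k * a (\<sigma> k))"
  define E where "E = (\<Sum>k\<in>A. \<gamma> k * (a k)^2)"
  obtain k0 where k0: "k0 \<in> A" "a k0 \<noteq> 0"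
    using nz by blast
  have S: "0 < S"
    unfolding S_def using A k0 by (intro sum_pos2) auto
  have L: "1 \<le> real L"
    using orbit[OF k0] by auto
  have D: "0 \<le> D" and P: "0 \<le> P"
    unfolding D_def P_def using a \<gamma> bij_betwE[OF \<sigma>] by (auto intro!: sum_nonneg)
  have "(\<Sum>k\<in>A. (2 - \<gamma> (\<sigma> k)) * a k * a (\<sigma> k)) = 2*(\<Sum>k\<in>A. a k * a (\<sigma> k)) - P"
    unfolding P_def by (simp add: algebra_simps sum_subtractf sum_distrib_left)
  then have energy: "2*D + 2*P \<le> (4 - \<mu>)*S"
    using eig sum_sq_diff_orbit[OF \<sigma>, of a] unfolding S_def D_def by (simp add: algebra_simps)
  have "E \<le> P + g/(8*real L)*S + D/(g/(8*real L))"
    unfolding E_def P_def S_def D_def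
    using sum_weighted_sq_le_cross[OF \<sigma>, of a \<gamma> "g/(8*real L)"] a \<gamma> g L by simp
  then have cross: "E \<le> P + g/(8*real L)*S + 8*real L/g*D"
    by (simp add: mult.commute)
  have orbit_bound: "S \<le> 2*real L/g*E + 2*(real L)^2*D"
    unfolding S_def E_def D_def
    using sum_sq_le_orbit_bound[OF \<sigma> _ g(1) orbit] \<gamma> by simp
  show ?thesis
    by (rule spectral_gap_arith[OF S L g D P _ cross orbit_bound]) (use energy in simp)
qed

section \<open>Fourier analysis on the residues modulo N\<close>

lemma bij_betw_affine_mod:
  fixes a b N :: int
  assumes N: "N > 0" and a: "coprime a N"
  shows "bij_betw (\<lambda>x. (a*x + b) mod N) {0..<N} {0..<N}"
proof -
  have "inj_on (\<lambda>x. (a*x + b) mod N) {0..<N}"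
  proof (rule inj_onI)
    fix x y assume xy: "x \<in> {0..<N}" "y \<in> {0..<N}" "(a*x + b) mod N = (a*y + b) mod N"
    then have "[a*x = a*y] (mod N)"
      by (simp add: cong_def[symmetric] cong_add_rcancel)
    then have "[x = y] (mod N)"
      using a cong_mult_lcancel by blast
    then show "x = y"
      using xy by (simp add: cong_def)
  qed
  moreover have "(\<lambda>x. (a*x + b) mod N) ` {0..<N} \<subseteq> {0..<N}"
    using N by auto
  ultimately show ?thesis
    by (simp add: bij_betw_def endo_inj_surj)
qed

lemma sum_residues_affine_reindex:
  fixes h :: "int \<Rightarrow> 'a::comm_monoid_add"
  assumes N: "N > 0" and a: "coprime a N" and h: "\<And>x. h (x mod N) = h x"
  shows "(\<Sum>x\<in>{0..<N}. h (a*x + b)) = (\<Sum>x\<in>{0..<N}. h x)"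
  using sum.reindex_bij_betw[OF bij_betw_affine_mod[OF N a, of b], of h] h by simp

definition unity_root :: "int \<Rightarrow> int \<Rightarrow> complex" where
  "unity_root N m = cis (2 * pi * of_int m / of_int N)"

lemma unity_root_add: "unity_root N (a + b) = unity_root N a * unity_root N b"
  by (simp add: unity_root_def cis_mult add_divide_distrib ring_distribs)

lemma unity_root_cong:
  assumes "[a = b] (mod N)"
  shows "unity_root N a = unity_root N b"
proof -
  obtain q where q: "a = b + N * q"
    using assms by (metis cong_iff_lin cong_sym)
  show ?thesis
  proof (cases "N = 0")
    case False
    then have "2 * pi * of_int a / of_int N = 2 * pi * of_int b / of_int N + 2 * pi * of_int q"
      by (simp add: q field_simps)
    then show ?thesis
      by (simp add: unity_root_def flip: cis_mult)
  qed (use q in simp)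
qed

lemma unity_root_eq_1_iff:
  assumes "N \<noteq> 0"
  shows "unity_root N m = 1 \<longleftrightarrow> N dvd m"
proof
  assume "unity_root N m = 1"
  then obtain q :: int where "2 * pi * of_int m / of_int N = 2 * pi * of_int q"
    unfolding unity_root_def cis_eq_1_iff by (metis mult.commute)
  then have "m = N * q"
    using assms by (simp add: field_simps) (metis of_int_eq_iff of_int_mult)
  then show "N dvd m" by simp
next
  assume "N dvd m"
  then have "[m = 0] (mod N)"
    by (simp add: cong_0_iff)
  then have "unity_root N m = unity_root N 0"
    by (rule unity_root_cong)
  then show "unity_root N m = 1"
    by (simp add: unity_root_def)
qed

lemma sum_unity_root_eq_0:
  assumes N: "N > 0" and m: "\<not> N dvd m"
  shows "(\<Sum>k\<in>{0..<N}. unity_root N (k*m)) = 0"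
proof -
  let ?T = "\<Sum>k\<in>{0..<N}. unity_root N (k*m)"
  have periodic: "unity_root N ((k mod N) * m) = unity_root N (k*m)" for k
    by (intro unity_root_cong cong_mult cong_mod_left) auto
  have "unity_root N m * ?T = (\<Sum>k\<in>{0..<N}. unity_root N ((1*k + 1)*m))"
    by (simp add: sum_distrib_left algebra_simps flip: unity_root_add)
  also have "\<dots> = ?T"
    using sum_residues_affine_reindex[where h="\<lambda>k. unity_root N (k*m)" and a=1 and b=1, OF N _ periodic]
    by simp
  finally have "(unity_root N m - 1) * ?T = 0"
    by (simp add: algebra_simps)
  then show ?thesis
    using unity_root_eq_1_iff[of N m] N m by simp
qed

definition dft :: "int \<Rightarrow> (int \<Rightarrow> complex) \<Rightarrow> int \<Rightarrow> complex" where
  "dft N f k = (\<Sum>x\<in>{0..<N}. f x * unity_root N (- (k*x)))"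

lemma dft_cong:
  assumes "[k = k'] (mod N)"
  shows "dft N f k = dft N f k'"
proof -
  have "[- (k*x) = - (k'*x)] (mod N)" for x
    using assms by (simp add: cong_minus_minus_iff cong_scalar_right)
  then have "unity_root N (- (k*x)) = unity_root N (- (k'*x))" for x
    by (rule unity_root_cong)
  then show ?thesis
    by (simp add: dft_def)
qed

lemma dft_mod [simp]: "dft N f (k mod N) = dft N f k"
  by (rule dft_cong) (simp add: cong_def)

lemma dft_inversion:
  assumes N: "N > 0" and x: "x \<in> {0..<N}"
  shows "(\<Sum>k\<in>{0..<N}. dft N f k * unity_root N (k*x)) = of_int N * f x"
proof -
  have orthogonality: "(\<Sum>k\<in>{0..<N}. unity_root N (k*(x - y))) = (if y = x then of_int N else 0)"
    if y: "y \<in> {0..<N}" for y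
  proof (cases "y = x")
    case False
    have "\<not> N dvd (x - y)"
    proof
      assume "N dvd (x - y)"
      then have "x mod N = y mod N"
        by (simp add: mod_eq_dvd_iff)
      then show False
        using x y False by simp
    qed
    then show ?thesis
      using sum_unity_root_eq_0[OF N] False by simp
  qed (use N in \<open>simp add: unity_root_def\<close>)
  have "(\<Sum>k\<in>{0..<N}. dft N f k * unity_root N (k*x))
      = (\<Sum>k\<in>{0..<N}. \<Sum>y\<in>{0..<N}. f y * unity_root N (k*(x - y)))"
    unfolding dft_def sum_distrib_right
    by (intro sum.cong refl) (simp add: mult.assoc right_diff_distrib flip: unity_root_add)
  also have "\<dots> = (\<Sum>y\<in>{0..<N}. f y * (\<Sum>k\<in>{0..<N}. unity_root N (k*(x - y))))"
    by (subst sum.swap) (simp add: sum_distrib_left)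
  also have "\<dots> = (\<Sum>y\<in>{0..<N}. if y = x then f y * of_int N else 0)"
    by (intro sum.cong refl) (simp add: orthogonality)
  also have "\<dots> = of_int N * f x"
    using x by (simp add: mult.commute)
  finally show ?thesis .
qed

lemma ex_dft_nonzero:
  assumes N: "N > 0" and f: "\<exists>x\<in>{0..<N}. f x \<noteq> 0"
  shows "\<exists>k\<in>{0..<N}. dft N f k \<noteq> 0"
proof (rule ccontr)
  assume "\<not> ?thesis"
  moreover obtain x where "x \<in> {0..<N}" "f x \<noteq> 0"
    using f by blast
  ultimately show False
    using dft_inversion[OF N, of x f] N by simp
qed

text \<open>Substitute y = a x + b, so that x = a' (y - b) modulo N.\<close>

lemma dft_affine:
  assumes N: "N > 0" and inv: "[a * a' = 1] (mod N)"
  shows "(\<Sum>x\<in>{0..<N}. f ((a*x + b) mod N) * unity_root N (- (k*x)))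
    = unity_root N (a'*b*k) * dft N f (a'*k)"
proof -
  define h where "h y = f (y mod N) * unity_root N (a'*k*(b - y))" for y
  have "coprime (a * a') N"
    using cong_imp_coprime[of 1 "a * a'" N] inv by (simp add: cong_sym)
  then have a: "coprime a N"
    by simp
  have periodic: "h (y mod N) = h y" for y
  proof -
    have "[a'*k*(b - y mod N) = a'*k*(b - y)] (mod N)"
      by (intro cong_mult cong_diff cong_refl) (simp add: cong_def)
    then show ?thesis
      unfolding h_def using unity_root_cong by simp
  qed
  have "unity_root N (- (k*x)) = unity_root N (a'*k*(b - (a*x + b)))" for x
  proof (rule unity_root_cong)
    have "[a' * k * (b - (a*x + b)) = - (k*x) * (a * a')] (mod N)"
      by (simp add: algebra_simps)
    also have "[- (k*x) * (a * a') = - (k*x) * 1] (mod N)"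
      by (intro cong_mult inv cong_refl)
    finally show "[- (k*x) = a'*k*(b - (a*x + b))] (mod N)"
      by (simp add: cong_sym)
  qed
  then have "(\<Sum>x\<in>{0..<N}. f ((a*x + b) mod N) * unity_root N (- (k*x))) = (\<Sum>x\<in>{0..<N}. h (a*x + b))"
    by (simp add: h_def)
  also have "\<dots> = (\<Sum>y\<in>{0..<N}. h y)"
    by (rule sum_residues_affine_reindex[where h=h and b=b, OF N a periodic])
  also have "\<dots> = unity_root N (a'*b*k) * dft N f (a'*k)"
    unfolding h_def dft_def sum_distrib_left
    by (intro sum.cong refl) (simp add: algebra_simps flip: unity_root_add)
  finally show ?thesis .
qed

definition cycle_eigenvalue :: "int \<Rightarrow> int \<Rightarrow> real" where
  "cycle_eigenvalue N k = 2 * cos (2 * pi * of_int k / of_int N)"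

lemma unity_root_add_unity_root_uminus:
  "unity_root N k + unity_root N (- k) = complex_of_real (cycle_eigenvalue N k)"
  by (simp add: unity_root_def cycle_eigenvalue_def complex_eq_iff)

lemma cycle_eigenvalue_cong:
  assumes "[k = k'] (mod N)"
  shows "cycle_eigenvalue N k = cycle_eigenvalue N k'"
proof -
  have "[- k = - k'] (mod N)"
    using assms by (simp add: cong_minus_minus_iff)
  then show ?thesis
    using unity_root_add_unity_root_uminus[of N k] unity_root_add_unity_root_uminus[of N k']
      unity_root_cong[OF assms] unity_root_cong[of "- k" "- k'" N] by simp
qed

lemma cycle_eigenvalue_mod [simp]: "cycle_eigenvalue N (k mod N) = cycle_eigenvalue N k"
  by (rule cycle_eigenvalue_cong) (simp add: cong_def)

lemma abs_cycle_eigenvalue_le: "\<bar>cycle_eigenvalue N k\<bar> \<le> 2"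
  by (simp add: cycle_eigenvalue_def abs_mult)

lemma dft_eigenfunction:
  assumes N: "N > 0" and inv: "[r * rb = 1] (mod N)"
    and eig: "\<forall>x\<in>{0..<N}. adj_op N r rb f x = lam * f x"
  shows "lam * dft N f k
    = cycle_eigenvalue N k * dft N f (rb*k) + cycle_eigenvalue N (r*k) * dft N f (r*k)"
proof -
  have inv': "[rb * r = 1] (mod N)"
    using inv by (simp add: mult.commute)
  have "unity_root N (rb*r*k) = unity_root N k" "unity_root N (rb*(-r)*k) = unity_root N (- k)"
    using cong_scalar_right[OF inv', of k] cong_scalar_right[OF inv', of "- k"]
    by (simp_all add: unity_root_cong)
  then have shifts: "unity_root N (rb*r*k) + unity_root N (rb*(-r)*k) = cycle_eigenvalue N k"
      "unity_root N (r*1*k) + unity_root N (r*(-1)*k) = cycle_eigenvalue N (r*k)"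
    by (simp_all add: unity_root_add_unity_root_uminus)
  have "lam * dft N f k = (\<Sum>x\<in>{0..<N}. adj_op N r rb f x * unity_root N (- (k*x)))"
    unfolding dft_def sum_distrib_left using eig by (simp add: mult.assoc)
  also have "\<dots> = (\<Sum>x\<in>{0..<N}. f ((r*x + r) mod N) * unity_root N (- (k*x)))
      + (\<Sum>x\<in>{0..<N}. f ((r*x + -r) mod N) * unity_root N (- (k*x)))
      + (\<Sum>x\<in>{0..<N}. f ((rb*x + 1) mod N) * unity_root N (- (k*x)))
      + (\<Sum>x\<in>{0..<N}. f ((rb*x + -1) mod N) * unity_root N (- (k*x)))"
    by (simp add: adj_op_def nbrs_def sum.distrib algebra_simps)
  also have "\<dots> = (unity_root N (rb*r*k) + unity_root N (rb*(-r)*k)) * dft N f (rb*k)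
      + (unity_root N (r*1*k) + unity_root N (r*(-1)*k)) * dft N f (r*k)"
    by (simp only: dft_affine[OF N inv] dft_affine[OF N inv'] distrib_right add.assoc)
  finally show ?thesis
    unfolding shifts .
qed

section \<open>Orbits of multiplication by r\<close>

lemma cong_mult_self_if_dvd_double:
  fixes N r k :: int
  assumes r: "coprime N r" and k: "N dvd 2*k"
  shows "[r*k = k] (mod N)"
proof (cases "even r")
  case True
  then have "coprime N 2"
    using r by (auto elim!: evenE)
  then have "N dvd k"
    using k by (simp add: coprime_dvd_mult_right_iff)
  then show ?thesis
    by (simp add: cong_iff_dvd_diff dvd_diff)
next
  case False
  then obtain m where "r - 1 = 2*m"
    by (metis odd_two_times_div_two_succ add_diff_cancel_right')
  then have "r*k - k = m*(2*k)"
    by (simp add: algebra_simps)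
  then show ?thesis
    using k by (simp add: cong_iff_dvd_diff)
qed

lemma exists_centered_residue:
  fixes N m :: int
  assumes N: "N > 0" and m: "\<not> N dvd m"
  shows "\<exists>v. v \<noteq> 0 \<and> 2*\<bar>v\<bar> \<le> N \<and> [m = v] (mod N)"
proof -
  define u where "u = m mod N"
  have "0 \<le> u" "u \<noteq> 0"
    using N m by (simp_all add: u_def dvd_eq_mod_eq_0)
  moreover have "u < N" "[m = u] (mod N)"
    using N by (simp_all add: u_def cong_def)
  ultimately have u: "0 < u" "u < N" "[m = u] (mod N)"
    by simp_all
  show ?thesis
  proof (cases "2*u \<le> N")
    case True
    then show ?thesis
      using u by (intro exI[of _ u]) auto
  next
    case False
    have "[u = u - N] (mod N)"
      by (simp add: cong_iff_dvd_diff)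
    then have "[m = u - N] (mod N)"
      using u(3) by (rule cong_trans[rotated])
    then show ?thesis
      using False u by (intro exI[of _ "u - N"]) auto
  qed
qed

lemma exists_power_window:
  fixes r v N :: int
  assumes r: "r > 1" and v: "v \<noteq> 0" "2*\<bar>v\<bar> \<le> N"
  shows "\<exists>j. 2*r^j*\<bar>v\<bar> \<le> N \<and> N < 2*r^Suc j*\<bar>v\<bar>"
proof -
  define P where "P j \<longleftrightarrow> N < 2*r^j*\<bar>v\<bar>" for j
  have "int (nat N) < int (2 ^ nat N)"
    by (simp only: of_nat_less_iff less_exp)
  moreover have "0 \<le> N"
    using v(2) abs_ge_zero[of v] by linarith
  ultimately have "N < 2 ^ nat N"
    by simp
  also have "\<dots> \<le> r ^ nat N"
    using r by (intro power_mono) auto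
  also have "\<dots> \<le> 2 * r ^ nat N * \<bar>v\<bar>"
    using r v by (simp add: mult_le_cancel_left1)
  finally have "P (nat N)"
    by (simp add: P_def)
  moreover have "\<not> P 0"
    using v by (simp add: P_def)
  ultimately obtain j where "\<not> P j" "P (Suc j)"
    using ex_least_nat_less[of P "nat N"] by auto
  then show ?thesis
    unfolding P_def not_less by blast
qed

lemma abs_cos_le_if_window:
  fixes N r m w :: int
  assumes N: "N > 0" and r: "r > 0" and m: "[2*m = w] (mod N)"
    and upper: "2*\<bar>w\<bar> \<le> N" and lower: "N < 2*r*\<bar>w\<bar>"
  shows "\<bar>cos (2*pi*m/N)\<bar> \<le> cos (pi/(2*r))"
proof -
  define \<theta> where "\<theta> = pi*\<bar>w\<bar>/N"
  have "2*\<bar>real_of_int w\<bar> \<le> N" and "N < 2*real_of_int r*\<bar>real_of_int w\<bar>"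
    using of_int_le_iff[of "2*\<bar>w\<bar>" N, THEN iffD2, OF upper]
      of_int_less_iff[of N "2*r*\<bar>w\<bar>", THEN iffD2, OF lower] by simp_all
  then have \<theta>: "pi/(2*r) \<le> \<theta>" "\<theta> \<le> pi/2"
    unfolding \<theta>_def using N r by (simp_all add: field_simps)
  have "0 < pi/(2*r)"
    using r by simp
  obtain q where q: "2*m = w + N*q"
    using m by (metis cong_iff_lin cong_sym)
  then have "2*real_of_int m = w + N*q"
    using arg_cong[OF q, of real_of_int] by simp
  then have "2*pi*m/N = pi*w/N + pi*q"
    using N by (simp add: field_simps)
  then have "\<bar>cos (2*pi*m/N)\<bar> = \<bar>cos (pi*w/N)\<bar>"
    by (simp add: cos_add)
  also have "\<dots> = cos \<theta>"
  proof -
    have "0 \<le> cos \<theta>"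
      using \<theta> \<open>0 < pi/(2*r)\<close> by (intro cos_ge_zero) linarith+
    moreover have "cos (pi*w/N) = cos \<theta>"
      using N cos_abs_real[of "pi*w/N"] by (simp add: \<theta>_def abs_mult abs_divide)
    ultimately show ?thesis
      by simp
  qed
  also have "\<dots> \<le> cos (pi/(2*r))"
    using \<theta> \<open>0 < pi/(2*r)\<close> by (intro cos_monotone_0_pi_le) auto
  finally show ?thesis .
qed

text \<open>Multiplication by r scales the centred residue v of 2 k; the last power r^j with
  2 r^j |v| \<le> N moves 2 r^j k into the window N / (2 r) < |w| \<le> N / 2 modulo N.\<close>

lemma abs_cos_orbit_bound:
  fixes N r k :: int
  assumes r: "r > 1" and N: "N > 0" and k: "\<not> N dvd 2*k"
  shows "\<exists>j. 2^Suc j \<le> N \<and> \<bar>cos (2*pi*(r^j*k)/N)\<bar> \<le> cos (pi/(2*r))"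
proof -
  obtain v where v: "v \<noteq> 0" "2*\<bar>v\<bar> \<le> N" "[2*k = v] (mod N)"
    using exists_centered_residue[OF N k] by blast
  obtain j where j: "2*r^j*\<bar>v\<bar> \<le> N" "N < 2*r^Suc j*\<bar>v\<bar>"
    using exists_power_window[OF r v(1,2)] by blast
  have "(2::int)^j \<le> r^j"
    using r by (intro power_mono) auto
  also have "\<dots> \<le> r^j*\<bar>v\<bar>"
    using r v(1) by (simp add: mult_le_cancel_left1)
  finally have "2*2^j \<le> 2*r^j*\<bar>v\<bar>"
    by simp
  then have "2^Suc j \<le> N"
    using j(1) by simp
  moreover have "[2 * (r^j * k) = r^j * v] (mod N)"
    using cong_scalar_left[OF v(3), of "r^j"] by (simp add: mult.left_commute)
  then have "\<bar>cos (2*pi*(r^j*k)/N)\<bar> \<le> cos (pi/(2*r))"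
    using j r N by (intro abs_cos_le_if_window) (auto simp: abs_mult mult_ac)
  ultimately show ?thesis
    by blast
qed

lemma less_floor_log2_if_pow_le:
  fixes N :: int
  assumes "2^Suc j \<le> N"
  shows "j < nat \<lfloor>log 2 N\<rfloor>"
proof -
  have "(2::real)^Suc j \<le> N"
    using assms by (metis of_int_le_iff of_int_numeral of_int_power)
  then have "real (Suc j) \<le> log 2 N"
    by (rule le_log_of_power) simp
  then show ?thesis
    by linarith
qed

lemma floor_log2_le_twice_ln:
  fixes N :: int
  assumes "N > 1"
  shows "real (nat \<lfloor>log 2 N\<rfloor>) \<le> 2 * ln N"
proof -
  have "0 \<le> log 2 N"
    using assms by simp
  then have "real (nat \<lfloor>log 2 N\<rfloor>) \<le> log 2 N"
    by linarith
  also have "\<dots> = ln N / ln 2"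
    by (simp add: log_def)
  also have "\<dots> \<le> 2 * ln N"
    using assms ln2_ge_two_thirds by (simp add: divide_le_eq mult_left_mono_neg)
  finally show ?thesis .
qed

lemma funpow_mult_mod:
  fixes r N k :: int
  assumes "k \<in> {0..<N}"
  shows "((\<lambda>k. (r*k) mod N) ^^ j) k = (r^j*k) mod N"
  using assms by (induction j) (simp_all add: mod_mult_right_eq mult.assoc)

lemma small_cycle_eigenvalue_on_orbit:
  fixes N r k :: int
  assumes r: "r > 1" and coprime: "coprime N r" and N: "N > 0" and k: "\<not> [r*k = k] (mod N)"
  shows "\<exists>j < nat \<lfloor>log 2 N\<rfloor>. \<bar>cycle_eigenvalue N (r^j*k)\<bar> \<le> 2 * cos (pi/(2*r))"
proof -
  have "\<not> N dvd 2*k"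
    using k cong_mult_self_if_dvd_double[OF coprime] by blast
  then obtain j where "2^Suc j \<le> N" "\<bar>cos (2*pi*(r^j*k)/N)\<bar> \<le> cos (pi/(2*r))"
    using abs_cos_orbit_bound[OF r N] by blast
  then show ?thesis
    using less_floor_log2_if_pow_le by (auto simp: cycle_eigenvalue_def abs_mult)
qed

section \<open>Eigenvalues of the graph\<close>

lemma cos_pi_div_bounds:
  fixes r :: int
  assumes "r > 1"
  shows "0 \<le> cos (pi/(2*r))" "cos (pi/(2*r)) < 1"
proof -
  have "0 < pi/(2*r)" "pi/(2*r) \<le> pi/2"
    using assms by (simp_all add: field_simps)
  then show "0 \<le> cos (pi/(2*r))" "cos (pi/(2*r)) < 1"
    using cos_monotone_0_pi[of 0 "pi/(2*r)"] by (auto intro: cos_ge_zero)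
qed

lemma norm_eigenvalue_le_dft_orbit_sum:
  fixes N r rb :: int
  assumes N: "N > 0" and coprime: "coprime N r" and inv: "[r * rb = 1] (mod N)"
    and eig: "\<forall>x\<in>{0..<N}. adj_op N r rb f x = lam * f x"
  shows "cmod lam * (\<Sum>k\<in>{0..<N}. (cmod (dft N f k))^2)
    \<le> 2 * (\<Sum>k\<in>{0..<N}. \<bar>cycle_eigenvalue N (r*k)\<bar> * cmod (dft N f k) * cmod (dft N f (r*k)))"
proof -
  have \<sigma>: "bij_betw (\<lambda>k. (r*k) mod N) {0..<N} {0..<N}"
    using bij_betw_affine_mod[OF N, of r 0] coprime by (simp add: coprime_commute)
  have inverse: "(rb * ((r*k) mod N)) mod N = k" if "k \<in> {0..<N}" for k
  proof -
    have "[rb * ((r*k) mod N) = (r * rb) * k] (mod N)"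
      by (simp add: cong_def mod_mult_right_eq mult_ac)
    also have "[(r * rb) * k = 1 * k] (mod N)"
      by (intro cong_scalar_right inv)
    finally show ?thesis
      using that by (simp add: cong_def)
  qed
  have "lam * dft N f k = cycle_eigenvalue N k * dft N f ((rb*k) mod N)
      + cycle_eigenvalue N ((r*k) mod N) * dft N f ((r*k) mod N)" for k
    using dft_eigenfunction[OF N inv eig] by simp
  then show ?thesis
    using norm_eigenvalue_le_orbit_sum[OF \<sigma>, where \<tau>="\<lambda>k. (rb*k) mod N" and F="dft N f"
        and w="cycle_eigenvalue N"] inverse by simp
qed

lemma norm_eigenvalue_gap_if_dft_vanishes_on_fixed:
  fixes N r rb :: int
  assumes N: "N > 1" and r: "r > 1" and coprime: "coprime N r" and inv: "[r * rb = 1] (mod N)"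
    and eig: "\<forall>x\<in>{0..<N}. adj_op N r rb f x = lam * f x" and nz: "\<exists>x\<in>{0..<N}. f x \<noteq> 0"
    and fixed: "\<And>k. [r*k = k] (mod N) \<Longrightarrow> dft N f k = 0"
  shows "(2 - 2 * cos (pi/(2*r)))^2 \<le> 16 * (real (nat \<lfloor>log 2 N\<rfloor>))^2 * (4 - cmod lam)"
proof -
  define \<sigma> where "\<sigma> k = (r*k) mod N" for k
  define a where "a k = cmod (dft N f k)" for k
  have N0: "N > 0"
    using N by simp
  have \<sigma>: "bij_betw \<sigma> {0..<N} {0..<N}"
    unfolding \<sigma>_def using bij_betw_affine_mod[OF N0, of r 0] coprime by (simp add: coprime_commute)
  have energy: "cmod lam * (\<Sum>k\<in>{0..<N}. (a k)^2)
      \<le> 2 * (\<Sum>k\<in>{0..<N}. (2 - (2 - \<bar>cycle_eigenvalue N (\<sigma> k)\<bar>)) * a k * a (\<sigma> k))"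
    using norm_eigenvalue_le_dft_orbit_sum[OF N0 coprime inv eig] by (simp add: a_def \<sigma>_def)
  have orbit: "\<exists>j<nat \<lfloor>log 2 N\<rfloor>. 2 - 2 * cos (pi/(2*r)) \<le> 2 - \<bar>cycle_eigenvalue N ((\<sigma>^^j) k)\<bar>"
    if k: "k \<in> {0..<N}" "a k \<noteq> 0" for k
  proof -
    have "\<not> [r*k = k] (mod N)"
      using fixed k by (auto simp: a_def)
    then obtain j where "j < nat \<lfloor>log 2 N\<rfloor>" "\<bar>cycle_eigenvalue N (r^j*k)\<bar> \<le> 2 * cos (pi/(2*r))"
      using small_cycle_eigenvalue_on_orbit[OF r coprime N0] by blast
    moreover have "(\<sigma>^^j) k = (r^j*k) mod N"
      unfolding \<sigma>_def using k by (intro funpow_mult_mod)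
    ultimately show ?thesis
      by auto
  qed
  have "\<exists>k\<in>{0..<N}. a k \<noteq> 0"
    using ex_dft_nonzero[OF N0 nz] by (simp add: a_def)
  moreover have "0 < 2 - 2 * cos (pi/(2*r))" "2 - 2 * cos (pi/(2*r)) \<le> 2"
    using cos_pi_div_bounds[OF r] by simp_all
  ultimately show ?thesis
    using orbit_spectral_gap[OF _ \<sigma> _ _ _ _ _ orbit energy] abs_cycle_eigenvalue_le
    by (simp add: a_def)
qed

lemma eigenvalue_eq_if_dft_nonzero_on_fixed:
  fixes N r rb :: int
  assumes N: "N > 0" and inv: "[r * rb = 1] (mod N)"
    and eig: "\<forall>x\<in>{0..<N}. adj_op N r rb f x = lam * f x"
    and k: "[r*k = k] (mod N)" "dft N f k \<noteq> 0"
  shows "lam = 4 * cos (2*pi*k/N)"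
proof -
  have "[rb*k = rb*(r*k)] (mod N)"
    using k(1) by (simp add: cong_scalar_left cong_sym)
  also have "[rb*(r*k) = k] (mod N)"
    using cong_scalar_right[OF inv, of k] by (simp add: mult_ac)
  finally have "lam * dft N f k = 2 * cycle_eigenvalue N k * dft N f k"
    using dft_eigenfunction[OF N inv eig, of k] dft_cong[OF k(1)] cycle_eigenvalue_cong[OF k(1)]
    by (simp add: dft_cong)
  then show ?thesis
    using k(2) by (simp add: cycle_eigenvalue_def)
qed

lemma eigenvalue_dichotomy:
  fixes N r rb :: int
  assumes N: "N > 1" and r: "r > 1" and coprime: "coprime N r" and inv: "[r * rb = 1] (mod N)"
    and lam: "is_eigenvalue N r rb lam"
  shows "(\<exists>k. [r*k = k] (mod N) \<and> lam = complex_of_real (4 * cos (2*pi*k/N)))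
    \<or> cmod lam \<le> 4 - (2 - 2 * cos (pi/(2*r)))^2 / 64 / (ln N)^2"
proof -
  obtain f where nz: "\<exists>x\<in>{0..<N}. f x \<noteq> 0" and eig: "\<forall>x\<in>{0..<N}. adj_op N r rb f x = lam * f x"
    using lam unfolding is_eigenvalue_def by blast
  show ?thesis
  proof (cases "\<exists>k. [r*k = k] (mod N) \<and> dft N f k \<noteq> 0")
    case True
    then show ?thesis
      using eigenvalue_eq_if_dft_nonzero_on_fixed[OF _ inv eig] N by auto
  next
    case False
    define g where "g = 2 - 2 * cos (pi/(2*r))"
    define L where "L = real (nat \<lfloor>log 2 N\<rfloor>)"
    have gap: "g^2 \<le> 16 * L^2 * (4 - cmod lam)"
      unfolding g_def L_def
      using norm_eigenvalue_gap_if_dft_vanishes_on_fixed[OF N r coprime inv eig nz] False by blast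
    have "0 < g"
      using cos_pi_div_bounds[OF r] by (simp add: g_def)
    then have "0 < 16 * L^2 * (4 - cmod lam)"
      using gap zero_less_power[OF \<open>0 < g\<close>, of 2] by linarith
    then have "0 < 4 - cmod lam"
      by (simp add: zero_less_mult_iff)
    moreover have "L^2 \<le> 4 * (ln N)^2"
      using floor_log2_le_twice_ln[OF N] power_mono[of L "2 * ln N" 2] by (simp add: L_def power_mult_distrib)
    ultimately have "16 * L^2 * (4 - cmod lam) \<le> 64 * (ln N)^2 * (4 - cmod lam)"
      by (intro mult_right_mono) auto
    then have "g^2 \<le> 64 * (ln N)^2 * (4 - cmod lam)"
      using gap by linarith
    then show ?thesis
      using N by (simp add: g_def field_simps)
  qed
qed

lemma is_bipartite_if_odd:
  fixes N r rb :: int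
  assumes N: "N > 0" "even N" and r: "odd r" and rb: "odd rb"
  shows "is_bipartite N r rb"
  unfolding is_bipartite_def
proof (intro exI[of _ "{x\<in>{0..<N}. even x}"] conjI ballI)
  have parity: "even (a mod N) \<longleftrightarrow> even a" for a
    using dvd_mod_iff[OF N(2)] by blast
  fix x y assume x: "x \<in> {0..<N}" and y: "y \<in> set (nbrs N r rb x)"
  have "y \<in> {0..<N}"
    using y N(1) by (auto simp: nbrs_def)
  moreover have "even y \<longleftrightarrow> odd x"
    using y r rb by (auto simp: nbrs_def parity)
  ultimately show "x \<in> {x\<in>{0..<N}. even x} \<longleftrightarrow> y \<notin> {x\<in>{0..<N}. even x}"
    using x by auto
qed auto

lemma abs_cos_fixed_frequency:
  fixes N r k :: int and m :: nat
  assumes N: "N = 2^m" and r: "gcd (r - 1) N = 2" and k: "[r*k = k] (mod N)"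
  shows "\<bar>cos (2*pi*k/N)\<bar> = 1"
proof -
  obtain n where n: "m = Suc n"
    using r N by (cases m) auto
  obtain w where w: "r - 1 = 2*w"
    using r by (metis gcd_dvd1 dvdE)
  have "2 * gcd w (2^n) = gcd (2*w) (2*2^n)"
    using gcd_mult_distrib_int[of 2 w "2^n"] by simp
  then have "coprime (2^n) w"
    using r w N n by (simp add: coprime_iff_gcd_eq_1 gcd.commute)
  have "2*2^n dvd 2*(w*k)"
    using k N n w by (simp add: cong_iff_dvd_diff algebra_simps)
  then have "2^n dvd k"
    using \<open>coprime (2^n) w\<close> by (simp add: coprime_dvd_mult_right_iff)
  then obtain q where "k = 2^n * q"
    by blast
  then have "2*pi*k/N = pi*q"
    using N n by simp
  then show ?thesis
    by simp
qed

lemma is_bipartite_if_power_of_two: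
  fixes N r rb :: int
  assumes N: "N = 2^m" "N > 1" and r: "gcd (r - 1) N = 2" and inv: "[r * rb = 1] (mod N)"
  shows "is_bipartite N r rb"
proof (rule is_bipartite_if_odd)
  show "0 < N"
    using N by simp
  show "even N"
    using N by (cases m) auto
  then have "2 dvd r * rb - 1"
    using inv by (metis cong_iff_dvd_diff dvd_trans)
  then show "odd rb"
    by auto
  have "2 dvd r - 1"
    using gcd_dvd1[of "r - 1" N] r by simp
  then show "odd r"
    by simp
qed

lemma norm_eigenvalue_gap_power_of_two:
  fixes N r rb :: int
  assumes N: "N > 1" and r: "r > 1" and coprime: "coprime N r" and inv: "[r * rb = 1] (mod N)"
    and two: "N = 2^m" "gcd (r - 1) N = 2"
    and lam: "is_eigenvalue N r rb lam" "lam \<noteq> 4" "lam \<noteq> -4"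
  shows "cmod lam \<le> 4 - (2 - 2 * cos (pi/(2*r)))^2 / 64 / (ln N)^2"
proof -
  have "\<not> (\<exists>k. [r*k = k] (mod N) \<and> lam = complex_of_real (4 * cos (2*pi*k/N)))"
  proof
    assume "\<exists>k. [r*k = k] (mod N) \<and> lam = complex_of_real (4 * cos (2*pi*k/N))"
    then obtain k where "\<bar>cos (2*pi*k/N)\<bar> = 1" "lam = complex_of_real (4 * cos (2*pi*k/N))"
      using abs_cos_fixed_frequency[OF two] by blast
    then show False
      using lam(2,3) by (auto simp: abs_if split: if_splits)
  qed
  then show ?thesis
    using eigenvalue_dichotomy[OF N r coprime inv lam(1)] by blast
qed

theorem theorem4:
  fixes r :: int
  assumes "r > 1"
  shows "\<exists>c>0. \<forall>N rb :: int. N > 1 \<longrightarrow> coprime N r \<longrightarrow> [r * rb = 1] (mod N) \<longrightarrow>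
           (\<forall>lam. is_nontrivial_eigenvalue N r rb lam \<longrightarrow>
              cmod lam \<le> 4 - c / (ln (real_of_int N))^2 \<or>
              (\<exists>k::int. [r * k = k] (mod N) \<and>
                 lam = complex_of_real (4 * cos (2 * pi * real_of_int k / real_of_int N))))
         \<and> ((\<exists>m::nat. N = 2 ^ m) \<and> gcd (r - 1) N = 2 \<longrightarrow>
              is_bipartite N r rb \<and>
              (\<forall>lam. is_eigenvalue N r rb lam \<longrightarrow> lam \<noteq> 4 \<longrightarrow> lam \<noteq> -4 \<longrightarrow>
                 cmod lam \<le> 4 - c / (ln (real_of_int N))^2))"
proof (intro exI[of _ "(2 - 2 * cos (pi/(2*r)))^2 / 64"] conjI allI impI)
  show "0 < (2 - 2 * cos (pi/(2*r)))^2 / 64"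
    using cos_pi_div_bounds[OF assms] by simp
next
  fix N rb :: int and lam
  assume "N > 1" "coprime N r" "[r * rb = 1] (mod N)" "is_nontrivial_eigenvalue N r rb lam"
  then show "cmod lam \<le> 4 - (2 - 2 * cos (pi/(2*r)))^2 / 64 / (ln N)^2
      \<or> (\<exists>k. [r * k = k] (mod N) \<and> lam = complex_of_real (4 * cos (2*pi*k/N)))"
    using eigenvalue_dichotomy[OF _ assms]
    unfolding is_nontrivial_eigenvalue_def is_eigenvalue_def by blast
next
  fix N rb :: int
  assume "N > 1" "[r * rb = 1] (mod N)" "(\<exists>m. N = 2^m) \<and> gcd (r - 1) N = 2"
  then show "is_bipartite N r rb"
    using is_bipartite_if_power_of_two by blast
next
  fix N rb :: int and lam
  assume "N > 1" "coprime N r" "[r * rb = 1] (mod N)" "(\<exists>m. N = 2^m) \<and> gcd (r - 1) N = 2"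
    and "is_eigenvalue N r rb lam" "lam \<noteq> 4" "lam \<noteq> -4"
  then show "cmod lam \<le> 4 - (2 - 2 * cos (pi/(2*r)))^2 / 64 / (ln N)^2"
    using norm_eigenvalue_gap_power_of_two[OF _ assms] by blast
qed

end
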